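(* There exists $C>0$ such that for all $g^{[1]},g^{[2]},g^{[3]},g^{[4]}\in G$, $$\|P_{g^{[1]},g^{[2]}}-P_{g^{[3]},g^{[4]}}\|_{H^1}\le C\big(|g^{[1]}-g^{[3]}|+|g^{[2]}-g^{[4]}|\big).$$ Moreover there exists $y_{\min}>0$ such that if $y_0\ge y_{\min}$ and $g^{[k]}=(y^{[k]},\phi^{[k]})$ satisfy $y^{[1]},y^{[3]}\ge y_0$ and $y^{[2]},y^{[4]}\le-y_0$, then $$\|g^{[1]}.w_*^+-g^{[3]}.w_*^+\|^2_{H^1}+\|g^{[2]}.w_*^--g^{[4]}.w_*^-\|^2_{H^1}\le\|P_{g^{[1]},g^{[2]}}-P_{g^{[3]},g^{[4]}}\|^2_{H^1}+Cy_0e^{-2\Gamma y_0}.$$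
   Context: $\gamma\in(-1,1)$, $\Gamma=\sqrt{1-\gamma^2}$, $e_1=(1,0,0)$. $G=\mathbb R\times\mathbb R/2\pi\mathbb Z$ acts on $w:\mathbb R\to\mathbb R^3$ by $(y,\phi).w:=R_\phi w(\cdot-y)$ ($R_\phi$ rotation of angle $\phi$ about $e_1$); $G$ is an additive group with $|(y,\phi)|:=|y|+\mathrm{dist}(\phi,2\pi\mathbb Z)$. $\theta_*(x)=2\arctan(e^{-\Gamma x})$, $w_*^\sigma(x)=(\cos\theta_*(\sigma_1x),\sigma_2\sin\theta_*(\sigma_1x)\cos(\gamma x),\sigma_1\sigma_2\sin\theta_*(\sigma_1x)\sin(\gamma x))$; $w_*^+:=w_*^{(1,\sigma_2)}$, $w_*^-:=w_*^{(-1,\sigma_2')}$ for fixed $\sigma_2,\sigma_2'\in\{\pm1\}$. $P_{g^+,g^-}:=g^+.w_*^++g^-.w_*^-+e_1$. $H^1=H^1(\mathbb R,\mathbb R^3)$. *)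

theory Defs
  imports "HOL-Analysis.Analysis"
begin

definition Gam :: "real \<Rightarrow> real" where
  "Gam \<gamma> = sqrt (1 - \<gamma>\<^sup>2)"

definition theta_star :: "real \<Rightarrow> real \<Rightarrow> real" where
  "theta_star \<gamma> x = 2 * arctan (exp (- Gam \<gamma> * x))"

text \<open>w_*^sigma with sigma = (s1, s2), s1, s2 in {-1, 1}\<close>
definition w_star :: "real \<Rightarrow> real \<Rightarrow> real \<Rightarrow> real \<Rightarrow> real^3" where
  "w_star \<gamma> s1 s2 x = vector
     [cos (theta_star \<gamma> (s1 * x)),
      s2 * sin (theta_star \<gamma> (s1 * x)) * cos (\<gamma> * x),
      s1 * s2 * sin (theta_star \<gamma> (s1 * x)) * sin (\<gamma> * x)]"

definition e1 :: "real^3" where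
  "e1 = vector [1, 0, 0]"

definition rot :: "real \<Rightarrow> real^3 \<Rightarrow> real^3" where
  "rot \<phi> v = vector [v$1, cos \<phi> * v$2 - sin \<phi> * v$3, sin \<phi> * v$2 + cos \<phi> * v$3]"

text \<open>Group G = R x R/2piZ, elements represented by pairs (y, phi) of reals;
  the action and the norm are 2pi-periodic in phi.\<close>
definition act :: "real \<times> real \<Rightarrow> (real \<Rightarrow> real^3) \<Rightarrow> (real \<Rightarrow> real^3)" where
  "act g w = (\<lambda>x. rot (snd g) (w (x - fst g)))"

definition gnorm :: "real \<times> real \<Rightarrow> real" where
  "gnorm g = \<bar>fst g\<bar> + infdist (snd g) (range (\<lambda>k::int. 2 * pi * of_int k))"

text \<open>P_{g+,g-} = g+.w_*^+ + g-.w_*^- + e1, with w_*^+ = w_*^{(1,s2)}, w_*^- = w_*^{(-1,s2')}\<close>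
definition P :: "real \<Rightarrow> real \<Rightarrow> real \<Rightarrow> real \<times> real \<Rightarrow> real \<times> real \<Rightarrow> real \<Rightarrow> real^3" where
  "P \<gamma> s2 s2' gp gm = (\<lambda>x. act gp (w_star \<gamma> 1 s2) x + act gm (w_star \<gamma> (-1) s2') x + e1)"

text \<open>H^1(R,R^3) norm (for the smooth, exponentially decaying functions considered here
  the classical derivative is the weak derivative).\<close>
definition H1norm :: "(real \<Rightarrow> real^3) \<Rightarrow> real" where
  "H1norm f = sqrt (\<integral>x. (norm (f x))\<^sup>2 + (norm (vector_derivative f (at x)))\<^sup>2 \<partial>lborel)"

end

theory Submission
  imports Defs
begin

text \<open>Both kinks are profiles that converge exponentially fast, together with their derivatives,
  to states on the rotation axis \<open>e1\<close>, which every rotation \<open>rot \<phi>\<close> fixes. Rotating such a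
  profile therefore only moves its exponentially small transverse part, by at most the distance of
  the angle to \<open>2\<pi>\<int>\<close> times its size; translating it by \<open>h\<close> changes it by \<open>O(\<bar>h\<bar>)\<close>, for
  \<open>\<bar>h\<bar> \<le> 1\<close> by the mean value theorem and for \<open>\<bar>h\<bar> \<ge> 1\<close> because, up to exponential tails, two
  translates differ only between their centres. So \<open>g \<mapsto> g.w\<close> is Lipschitz into \<open>H\<^sup>1\<close>, and
  \<open>P\<close> is a sum of two such maps. For the second estimate expand
  \<open>\<parallel>A + B\<parallel>\<^sup>2 = \<parallel>A\<parallel>\<^sup>2 + \<parallel>B\<parallel>\<^sup>2 + 2\<langle>A, B\<rangle>\<close> in \<open>H\<^sup>1\<close>: the difference \<open>A\<close> of the right kinks
  is exponentially small to the left of \<open>y\<^sub>0\<close> and the difference \<open>B\<close> of the left kinks to the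
  right of \<open>-y\<^sub>0\<close>, so the cross term is \<open>O(y\<^sub>0 exp (-2 \<Gamma> y\<^sub>0))\<close>.\<close>

section \<open>Hyperbolic functions\<close>

definition sech :: "real \<Rightarrow> real" where
  "sech t = 1 / cosh t"

lemma sech_pos: "0 < sech t"
  by (simp add: sech_def)

lemma sech_le_1: "sech t \<le> 1"
  using cosh_real_ge_1[of t] by (simp add: sech_def)

lemma sech_minus [simp]: "sech (- t) = sech t"
  by (simp add: sech_def)

lemma tanh_sq_add_sech_sq: "(tanh t)\<^sup>2 + (sech t)\<^sup>2 = 1"
proof -
  have "0 < 1 + (sinh t)\<^sup>2" by (simp add: add_pos_nonneg)
  then show ?thesis
    by (simp add: tanh_def sech_def power_divide cosh_square_eq field_simps)
qed

lemma sech_sq: "(sech t)\<^sup>2 = 1 - (tanh t)\<^sup>2"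
  using tanh_sq_add_sech_sq[of t] by simp

lemma abs_tanh_le_1: "\<bar>tanh (t::real)\<bar> \<le> 1"
  using tanh_real_bounds[of t] by auto

lemma has_real_derivative_sech [derivative_intros]:
  "(sech has_real_derivative - tanh t * sech t) (at t)"
  unfolding sech_def[abs_def] tanh_def
  by (auto intro!: derivative_eq_intros simp: field_simps power2_eq_square)

lemmas has_real_derivative_sech_chain [derivative_intros] =
  has_real_derivative_sech[THEN DERIV_chain2]

lemma sech_le_exp: "sech t \<le> 2 * exp (- \<bar>t\<bar>)"
proof -
  have "exp \<bar>t\<bar> \<le> 2 * cosh t"
    by (cases "0 \<le> t") (simp_all add: cosh_def)
  then have "sech t \<le> 2 / exp \<bar>t\<bar>"
    by (simp add: sech_def field_simps)
  then show ?thesis by (simp add: exp_minus field_simps)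
qed

lemma tanh_near_1:
  assumes "0 \<le> (t::real)" shows "\<bar>tanh t - 1\<bar> \<le> 2 * exp (- 2 * t)"
proof -
  define E where "E = exp (- 2 * t)"
  have "0 < E" by (simp add: E_def)
  have "tanh t = (1 - E) / (1 + E)" by (simp add: tanh_real_altdef E_def)
  with \<open>0 < E\<close> have "tanh t - 1 = - (2 * E / (1 + E))"
    by (simp add: field_simps)
  with \<open>0 < E\<close> have "\<bar>tanh t - 1\<bar> = 2 * E / (1 + E)"
    by simp
  also have "\<dots> \<le> 2 * E" using \<open>0 < E\<close> by (simp add: field_simps)
  finally show ?thesis by (simp add: E_def)
qed

lemma tanh_near_minus_1: "(t::real) \<le> 0 \<Longrightarrow> \<bar>tanh t + 1\<bar> \<le> 2 * exp (2 * t)"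
  using tanh_near_1[of "- t"] by (simp add: abs_minus_commute)

lemma cos_theta_star: "cos (theta_star \<gamma> z) = tanh (Gam \<gamma> * z)"
proof -
  have "cos (2 * arctan s) = (1 - s\<^sup>2) / (1 + s\<^sup>2)" for s
    by (simp add: cos_double cos_arctan sin_arctan power_divide add_pos_nonneg diff_divide_distrib)
  moreover have "(exp (- Gam \<gamma> * z))\<^sup>2 = exp (- 2 * (Gam \<gamma> * z))"
    by (simp flip: exp_add add: power2_eq_square)
  ultimately show ?thesis
    by (simp add: theta_star_def tanh_real_altdef)
qed

lemma sin_theta_star: "sin (theta_star \<gamma> z) = sech (Gam \<gamma> * z)"
proof -
  have sin_double_arctan: "sin (2 * arctan s) = 2 * s / (1 + s\<^sup>2)" for s
    by (simp add: sin_double sin_arctan cos_arctan power2_eq_square add_pos_nonneg)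
  have "exp (- Gam \<gamma> * z) * exp (Gam \<gamma> * z) = 1"
    by (simp flip: exp_add)
  then show ?thesis
    unfolding theta_star_def sin_double_arctan sech_def cosh_def
    by (simp add: power2_eq_square exp_minus field_simps)
qed

section \<open>The kink profile\<close>

lemma norm_vector3_le: "norm (vector [x, y, z] :: real^3) \<le> \<bar>x\<bar> + \<bar>y\<bar> + \<bar>z\<bar>"
  using norm_le_l1_cart[of "vector [x, y, z] :: real^3"] by (simp add: sum_3)

lemma has_vector_derivative_vector3:
  assumes "(f1 has_real_derivative d1) (at x)" "(f2 has_real_derivative d2) (at x)"
    "(f3 has_real_derivative d3) (at x)"
  shows "((\<lambda>x. vector [f1 x, f2 x, f3 x] :: real^3) has_vector_derivative vector [d1, d2, d3]) (at x)"
proof -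
  have comp: "((\<lambda>x. f x *\<^sub>R v) has_vector_derivative d *\<^sub>R v) (at x)"
    if "(f has_real_derivative d) (at x)" for f d and v :: "real^3"
    using has_vector_derivative_scaleR[OF that has_vector_derivative_const[of v]] by simp
  have split: "(vector [p, q, r] :: real^3)
      = p *\<^sub>R vector [1, 0, 0] + q *\<^sub>R vector [0, 1, 0] + r *\<^sub>R vector [0, 0, 1]" for p q r
    by (simp add: vec_eq_iff forall_3)
  have "((\<lambda>x. f1 x *\<^sub>R vector [1, 0, 0] + f2 x *\<^sub>R vector [0, 1, 0] + f3 x *\<^sub>R vector [0, 0, 1])
      has_vector_derivative
        d1 *\<^sub>R vector [1, 0, 0] + d2 *\<^sub>R vector [0, 1, 0] + d3 *\<^sub>R (vector [0, 0, 1] :: real^3)) (at x)"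
    by (intro has_vector_derivative_add comp assms)
  then show ?thesis
    by (simp only: split[symmetric])
qed

definition kink :: "real \<Rightarrow> real \<Rightarrow> real \<Rightarrow> real \<Rightarrow> real \<Rightarrow> real^3" where
  "kink G c a b z = vector
     [a * tanh (G * z), b * sech (G * z) * cos (c * z), b * sech (G * z) * sin (c * z)]"

definition kink_deriv :: "real \<Rightarrow> real \<Rightarrow> real \<Rightarrow> real \<Rightarrow> real \<Rightarrow> real^3" where
  "kink_deriv G c a b z = vector
     [a * G * (sech (G * z))\<^sup>2,
      - b * sech (G * z) * (G * tanh (G * z) * cos (c * z) + c * sin (c * z)),
      b * sech (G * z) * (c * cos (c * z) - G * tanh (G * z) * sin (c * z))]"

definition kink_deriv2 :: "real \<Rightarrow> real \<Rightarrow> real \<Rightarrow> real \<Rightarrow> real \<Rightarrow> real^3" where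
  "kink_deriv2 G c a b z = vector
     [- 2 * a * G\<^sup>2 * tanh (G * z) * (sech (G * z))\<^sup>2,
      b * sech (G * z) * ((G\<^sup>2 * ((tanh (G * z))\<^sup>2 - (sech (G * z))\<^sup>2) - c\<^sup>2) * cos (c * z)
        + 2 * G * c * tanh (G * z) * sin (c * z)),
      b * sech (G * z) * ((G\<^sup>2 * ((tanh (G * z))\<^sup>2 - (sech (G * z))\<^sup>2) - c\<^sup>2) * sin (c * z)
        - 2 * G * c * tanh (G * z) * cos (c * z))]"

lemma kink_has_vector_derivative:
  "(kink G c a b has_vector_derivative kink_deriv G c a b z) (at z)"
  unfolding kink_def[abs_def] kink_deriv_def
  by (intro has_vector_derivative_vector3)
    (auto intro!: derivative_eq_intros simp: sech_sq algebra_simps)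

lemma kink_deriv_has_vector_derivative:
  "(kink_deriv G c a b has_vector_derivative kink_deriv2 G c a b z) (at z)"
  unfolding kink_deriv_def[abs_def] kink_deriv2_def
  by (intro has_vector_derivative_vector3;
      auto intro!: derivative_eq_intros simp: sech_sq; algebra)

lemma w_star_eq_kink:
  assumes "s1 \<in> {-1, 1}"
  shows "w_star \<gamma> s1 s2 = kink (Gam \<gamma>) (s1 * \<gamma>) s1 s2"
  using assms
  by (auto simp: fun_eq_iff w_star_def kink_def cos_theta_star sin_theta_star)

lemma abs_mult_le_1: "\<bar>x\<bar> \<le> 1 \<Longrightarrow> \<bar>y\<bar> \<le> 1 \<Longrightarrow> \<bar>x * y :: real\<bar> \<le> 1"
  by (simp add: abs_mult mult_le_one)

lemma abs_weighted_le:
  assumes "\<bar>b\<bar> \<le> 1" "0 \<le> S" "\<bar>X\<bar> \<le> N"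
  shows "\<bar>b * S * X :: real\<bar> \<le> N * S"
proof -
  have "\<bar>b * S * X\<bar> = (\<bar>b\<bar> * \<bar>X\<bar>) * S" using assms(2) by (simp add: abs_mult)
  also have "\<dots> \<le> (1 * N) * S"
    using assms by (intro mult_right_mono mult_mono) auto
  finally show ?thesis by simp
qed

lemma sech_scaled_le_exp: "0 \<le> G \<Longrightarrow> sech (G * z) \<le> 2 * exp (- G * \<bar>z\<bar>)"
  using sech_le_exp[of "G * z"] by (simp add: abs_mult)

lemma sech_scaled_le_exp_weighted:
  "0 \<le> G \<Longrightarrow> 0 \<le> N \<Longrightarrow> N \<le> 10 \<Longrightarrow> N * sech (G * z) \<le> 20 * exp (- G * \<bar>z\<bar>)"
  using sech_scaled_le_exp[of G z] sech_pos[of "G * z"] mult_mono[of N 10 "sech (G * z)" "2 * exp (- G * \<bar>z\<bar>)"]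
  by simp

context
  fixes G c a b :: real
  assumes G: "0 \<le> G" "G \<le> 1" and c: "\<bar>c\<bar> \<le> 1" and a: "\<bar>a\<bar> \<le> 1" and b: "\<bar>b\<bar> \<le> 1"
begin

lemma norm_kink_deriv_le: "norm (kink_deriv G c a b z) \<le> 5 * sech (G * z)"
proof -
  define S T where "S = sech (G * z)" and "T = tanh (G * z)"
  have S: "0 < S" "S \<le> 1" and T: "\<bar>T\<bar> \<le> 1"
    by (simp_all add: S_def T_def sech_pos sech_le_1 abs_tanh_le_1)
  have "\<bar>a * G * S\<bar> \<le> 1" using G a S by (intro abs_mult_le_1) auto
  then have 1: "\<bar>a * G * S\<^sup>2\<bar> \<le> S"
    using S by (simp add: power2_eq_square abs_mult mult_le_one)
  have GT: "\<bar>G * T\<bar> \<le> 1" using G T by (intro abs_mult_le_1) auto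
  have GTC: "\<bar>G * T * cos (c * z)\<bar> \<le> 1" "\<bar>G * T * sin (c * z)\<bar> \<le> 1"
    using GT by (simp_all add: abs_mult_le_1)
  have cC: "\<bar>c * cos (c * z)\<bar> \<le> 1" "\<bar>c * sin (c * z)\<bar> \<le> 1"
    using c by (simp_all add: abs_mult_le_1)
  have "\<bar>- b * S * (G * T * cos (c * z) + c * sin (c * z))\<bar> \<le> 2 * S"
    using b S GTC cC by (intro abs_weighted_le) auto
  moreover have "\<bar>b * S * (c * cos (c * z) - G * T * sin (c * z))\<bar> \<le> 2 * S"
    using b S GTC cC by (intro abs_weighted_le) auto
  moreover have eq: "kink_deriv G c a b z = vector [a * G * S\<^sup>2,
      - b * S * (G * T * cos (c * z) + c * sin (c * z)), b * S * (c * cos (c * z) - G * T * sin (c * z))]"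
    by (simp add: kink_deriv_def S_def T_def)
  ultimately show ?thesis
    unfolding eq
    using 1 norm_vector3_le[of "a * G * S\<^sup>2" "- b * S * (G * T * cos (c * z) + c * sin (c * z))"
        "b * S * (c * cos (c * z) - G * T * sin (c * z))"]
    unfolding S_def by linarith
qed

lemma norm_kink_deriv2_le: "norm (kink_deriv2 G c a b z) \<le> 10 * sech (G * z)"
proof -
  define S T where "S = sech (G * z)" and "T = tanh (G * z)"
  define Q where "Q = G\<^sup>2 * (T\<^sup>2 - S\<^sup>2) - c\<^sup>2"
  have S: "0 < S" "S \<le> 1" and T: "\<bar>T\<bar> \<le> 1"
    by (simp_all add: S_def T_def sech_pos sech_le_1 abs_tanh_le_1)
  have G2: "\<bar>G\<^sup>2\<bar> \<le> 1" and c2: "c\<^sup>2 \<le> 1"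
    using G c by (simp_all add: abs_square_le_1)
  have "\<bar>T\<^sup>2 - S\<^sup>2\<bar> \<le> 1"
    using tanh_sq_add_sech_sq[of "G * z"] unfolding S_def[symmetric] T_def[symmetric]
    by (smt (verit) zero_le_power2)
  then have "\<bar>Q\<bar> \<le> 2"
    using abs_mult_le_1[OF G2] c2 unfolding Q_def by (smt (verit) zero_le_power2)
  then have Qb: "\<bar>Q * cos (c * z)\<bar> \<le> 2" "\<bar>Q * sin (c * z)\<bar> \<le> 2"
    using mult_mono[OF _ abs_cos_le_one] mult_mono[OF _ abs_sin_le_one]
    by (fastforce simp: abs_mult)+
  have "\<bar>G * c * T\<bar> \<le> 1" using G c T by (intro abs_mult_le_1) auto
  then have GcT: "\<bar>2 * G * c * T * sin (c * z)\<bar> \<le> 2" "\<bar>2 * G * c * T * cos (c * z)\<bar> \<le> 2"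
    using abs_mult_le_1[of "G * c * T" "sin (c * z)"] abs_mult_le_1[of "G * c * T" "cos (c * z)"]
    by (simp_all add: abs_mult)
  have "\<bar>a * G\<^sup>2 * T * S\<bar> \<le> 1"
    using a G2 T S by (intro abs_mult_le_1) auto
  then have "\<bar>(a * G\<^sup>2 * T * S) * S * (- 2)\<bar> \<le> 2 * S"
    using S by (intro abs_weighted_le) auto
  moreover have "\<bar>b * S * (Q * cos (c * z) + 2 * G * c * T * sin (c * z))\<bar> \<le> 4 * S"
    using b S Qb GcT by (intro abs_weighted_le) auto
  moreover have "\<bar>b * S * (Q * sin (c * z) - 2 * G * c * T * cos (c * z))\<bar> \<le> 4 * S"
    using b S Qb GcT by (intro abs_weighted_le) auto
  moreover have eq: "kink_deriv2 G c a b z = vector [(a * G\<^sup>2 * T * S) * S * (- 2),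
      b * S * (Q * cos (c * z) + 2 * G * c * T * sin (c * z)),
      b * S * (Q * sin (c * z) - 2 * G * c * T * cos (c * z))]"
    by (simp add: kink_deriv2_def S_def T_def Q_def power2_eq_square mult_ac)
  ultimately show ?thesis
    unfolding eq
    using norm_vector3_le[of "(a * G\<^sup>2 * T * S) * S * (- 2)"
        "b * S * (Q * cos (c * z) + 2 * G * c * T * sin (c * z))"
        "b * S * (Q * sin (c * z) - 2 * G * c * T * cos (c * z))"]
    unfolding S_def by linarith
qed

end

lemma norm_kink_sub_tail:
  assumes G: "0 \<le> G" and a: "\<bar>a\<bar> \<le> 1" and b: "\<bar>b\<bar> \<le> 1"
    and s: "s = 1 \<and> 0 \<le> z \<or> s = - 1 \<and> z \<le> 0"
  shows "norm (kink G c a b z - (s * a) *\<^sub>R e1) \<le> 6 * exp (- G * \<bar>z\<bar>)"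
proof -
  define S T where "S = sech (G * z)" and "T = tanh (G * z)"
  have S: "0 < S" "S \<le> 2 * exp (- G * \<bar>z\<bar>)"
    using sech_scaled_le_exp[OF G] by (simp_all add: S_def sech_pos)
  have "\<bar>T - s\<bar> \<le> 2 * exp (- 2 * (G * \<bar>z\<bar>))"
    using s tanh_near_1[of "G * z"] tanh_near_minus_1[of "G * z"] G
    by (auto simp: T_def abs_mult mult_nonneg_nonpos)
  also have "\<dots> \<le> 2 * exp (- G * \<bar>z\<bar>)" using G by simp
  finally have "\<bar>T - s\<bar> \<le> 2 * exp (- G * \<bar>z\<bar>)" .
  moreover have "\<bar>a * (T - s)\<bar> \<le> \<bar>T - s\<bar>"
    using a by (simp add: abs_mult mult_left_le_one_le)
  ultimately have "\<bar>a * (T - s)\<bar> \<le> 2 * exp (- G * \<bar>z\<bar>)"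
    by linarith
  moreover have "\<bar>b * S * cos (c * z)\<bar> \<le> S" "\<bar>b * S * sin (c * z)\<bar> \<le> S"
    using b S by (auto intro!: abs_weighted_le[where N = 1, simplified])
  moreover have eq: "kink G c a b z - (s * a) *\<^sub>R e1
      = vector [a * (T - s), b * S * cos (c * z), b * S * sin (c * z)]"
    by (simp add: kink_def e1_def vec_eq_iff forall_3 S_def T_def algebra_simps)
  ultimately show ?thesis
    unfolding eq
    using norm_vector3_le[of "a * (T - s)" "b * S * cos (c * z)" "b * S * sin (c * z)"] S
    by linarith
qed

section \<open>Rotations about \<open>e1\<close> and the action of \<open>G\<close>\<close>

lemma norm_vec3_sq: "(norm (v :: real^3))\<^sup>2 = (v$1)\<^sup>2 + (v$2)\<^sup>2 + (v$3)\<^sup>2"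
  by (simp add: norm_vec_def L2_set_def sum_3)

lemma norm_e1 [simp]: "norm e1 = 1"
  by (simp add: e1_def norm_vec_def L2_set_def sum_3)

lemma bounded_linear_rot: "bounded_linear (rot \<phi>)"
proof -
  have "linear (rot \<phi>)"
    by (rule linearI) (simp_all add: rot_def vec_eq_iff forall_3 algebra_simps)
  then show ?thesis by (rule linear_conv_bounded_linear[THEN iffD1])
qed

lemma rot_diff: "rot \<phi> (u - v) = rot \<phi> u - rot \<phi> v"
  by (rule linear_diff[OF bounded_linear.linear[OF bounded_linear_rot]])

lemma rot_axis [simp]: "rot \<phi> (l *\<^sub>R e1) = l *\<^sub>R e1"
  by (simp add: rot_def e1_def vec_eq_iff forall_3)

lemma norm_rot [simp]: "norm (rot \<phi> v) = norm v"
proof -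
  have "(cos \<phi> * v$2 - sin \<phi> * v$3)\<^sup>2 + (sin \<phi> * v$2 + cos \<phi> * v$3)\<^sup>2
      = ((sin \<phi>)\<^sup>2 + (cos \<phi>)\<^sup>2) * ((v$2)\<^sup>2 + (v$3)\<^sup>2)"
    by algebra
  then have "(norm (rot \<phi> v))\<^sup>2 = (norm v)\<^sup>2"
    by (simp add: norm_vec3_sq rot_def)
  then show ?thesis by (simp add: power2_eq_iff_nonneg)
qed

lemma two_sub_two_cos_le_infdist_sq:
  "2 - 2 * cos \<psi> \<le> (infdist \<psi> (range (\<lambda>k::int. 2 * pi * of_int k)))\<^sup>2"
proof -
  have "sqrt (2 - 2 * cos \<psi>) \<le> dist \<psi> (2 * pi * of_int k)" for k :: int
  proof -
    let ?t = "\<psi> - 2 * pi * of_int k"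
    have "cos \<psi> = cos ?t" by (simp add: cos_diff)
    also have "\<dots> = cos (2 * (?t / 2))" by (rule arg_cong[where f = cos]) simp
    also have "\<dots> = 1 - 2 * (sin (?t / 2))\<^sup>2" by (rule cos_double_sin)
    finally have "2 - 2 * cos \<psi> = (2 * sin (?t / 2))\<^sup>2" by (simp add: power_mult_distrib)
    then have "sqrt (2 - 2 * cos \<psi>) = \<bar>2 * sin (?t / 2)\<bar>" by (simp only: real_sqrt_abs)
    moreover have "\<bar>2 * sin (?t / 2)\<bar> \<le> \<bar>?t\<bar>"
      using abs_sin_x_le_abs_x[of "?t / 2"] by simp
    ultimately show ?thesis by (simp add: dist_real_def)
  qed
  then have "sqrt (2 - 2 * cos \<psi>) \<le> infdist \<psi> (range (\<lambda>k::int. 2 * pi * of_int k))"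
    by (auto simp: infdist_notempty intro!: cINF_greatest)
  moreover have "0 \<le> 2 - 2 * cos \<psi>" by (simp add: cos_le_one)
  ultimately show ?thesis
    by (metis real_sqrt_ge_zero real_sqrt_pow2 power_mono)
qed

lemma norm_rot_sub_rot_le:
  "norm (rot p v - rot q v) \<le> infdist (p - q) (range (\<lambda>k::int. 2 * pi * of_int k)) * norm (v - l *\<^sub>R e1)"
proof -
  define X Y where "X = cos p - cos q" and "Y = sin p - sin q"
  have "X\<^sup>2 + Y\<^sup>2 = 2 - 2 * cos (p - q)"
    using sin_cos_squared_add[of p] sin_cos_squared_add[of q]
    by (simp add: X_def Y_def power2_diff cos_diff algebra_simps)
  moreover have diff: "rot p v - rot q v = vector [0, X * v$2 - Y * v$3, Y * v$2 + X * v$3]"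
    by (simp add: rot_def X_def Y_def vec_eq_iff forall_3 algebra_simps)
  have "(norm (rot p v - rot q v))\<^sup>2 = (X\<^sup>2 + Y\<^sup>2) * ((v$2)\<^sup>2 + (v$3)\<^sup>2)"
    unfolding diff norm_vec3_sq by (simp add: power2_eq_square algebra_simps)
  ultimately have "(norm (rot p v - rot q v))\<^sup>2 = (2 - 2 * cos (p - q)) * ((v$2)\<^sup>2 + (v$3)\<^sup>2)"
    by simp
  also have "\<dots> \<le> (infdist (p - q) (range (\<lambda>k::int. 2 * pi * of_int k)))\<^sup>2 * (norm (v - l *\<^sub>R e1))\<^sup>2"
  proof (rule mult_mono)
    show "(v$2)\<^sup>2 + (v$3)\<^sup>2 \<le> (norm (v - l *\<^sub>R e1))\<^sup>2"
      unfolding norm_vec3_sq by (simp add: e1_def)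
  qed (rule two_sub_two_cos_le_infdist_sq, simp_all)
  finally have "(norm (rot p v - rot q v))\<^sup>2
      \<le> (infdist (p - q) (range (\<lambda>k::int. 2 * pi * of_int k)) * norm (v - l *\<^sub>R e1))\<^sup>2"
    by (simp only: power_mult_distrib)
  then show ?thesis
    by (rule power2_le_imp_le) (simp add: infdist_nonneg)
qed

lemma act_has_vector_derivative:
  assumes "\<And>z. (w has_vector_derivative w' z) (at z)"
  shows "(act g w has_vector_derivative act g w' x) (at x)"
proof -
  have "((\<lambda>x. x - fst g) has_vector_derivative 1) (at x)"
    by (auto intro!: derivative_eq_intros)
  from vector_diff_chain_at[OF this assms]
  have "((\<lambda>x. w (x - fst g)) has_vector_derivative w' (x - fst g)) (at x)"
    by (simp add: o_def)
  then show ?thesis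
    unfolding act_def by (rule bounded_linear.has_vector_derivative[OF bounded_linear_rot])
qed

lemma act_sub_axis: "act g w x - l *\<^sub>R e1 = rot (snd g) (w (x - fst g) - l *\<^sub>R e1)"
  by (simp add: act_def rot_diff)

lemma gnorm_nonneg: "0 \<le> gnorm g"
  by (simp add: gnorm_def infdist_nonneg)

section \<open>Integral estimates\<close>

lemma integrable_integral_le_dominated:
  fixes f g :: "real \<Rightarrow> real"
  assumes "continuous_on UNIV f" "integrable lborel g" "\<And>x. \<bar>f x\<bar> \<le> g x"
  shows "integrable lborel f \<and> integral\<^sup>L lborel f \<le> integral\<^sup>L lborel g"
proof
  have "f \<in> borel_measurable lborel"
    using borel_measurable_continuous_onI[OF assms(1)] by simp
  moreover have "\<bar>f x\<bar> \<le> \<bar>g x\<bar>" for x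
    using assms(3) by (meson abs_ge_self order_trans)
  ultimately show "integrable lborel f"
    by (intro Bochner_Integration.integrable_bound[OF assms(2)]) auto
  then show "integral\<^sup>L lborel f \<le> integral\<^sup>L lborel g"
    using assms by (intro integral_mono) (auto simp: abs_le_iff)
qed

lemma
  fixes c y :: real
  assumes "0 < c"
  shows integrable_exp_neg_abs: "integrable lborel (\<lambda>x. exp (- c * \<bar>x - y\<bar>))"
    and integral_exp_neg_abs_le: "(\<integral>x. exp (- c * \<bar>x - y\<bar>) \<partial>lborel) \<le> 2 / c"
proof -
  define h where "h = (\<lambda>x::real. if x \<in> {0..} then exp (- c * x) else 0)"
  have "((\<lambda>x. exp (- c * x)) has_integral 1 / c) {0..}"
    using has_integral_exp_minus_to_infinity[OF assms, of 0] by simp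
  then have "(h has_integral 1 / c) UNIV"
    unfolding h_def by (subst has_integral_restrict_UNIV) simp
  moreover have "h \<in> borel_measurable borel" unfolding h_def by measurable
  ultimately have "integral\<^sup>N lborel h = 1 / c"
    by (intro nn_integral_has_integral_lborel) (auto simp: h_def)
  then have "has_bochner_integral lborel h (1 / c)"
    using assms \<open>h \<in> borel_measurable borel\<close>
    by (intro has_bochner_integral_nn_integral) (auto simp: h_def)
  then have h: "integrable lborel h" "integral\<^sup>L lborel h = 1 / c"
    by (auto simp: has_bochner_integral_iff)
  let ?g = "\<lambda>x. h (- y + 1 * x) + h (y + (- 1) * x)"
  have g: "integrable lborel ?g" "integral\<^sup>L lborel ?g = 2 / c"
    using lborel_integrable_real_affine[OF h(1), of 1 "- y"] lborel_integrable_real_affine[OF h(1), of "- 1" y]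
      lborel_integral_real_affine[of 1 h "- y"] lborel_integral_real_affine[of "- 1" h y] h(2)
    by auto
  have "\<bar>exp (- c * \<bar>x - y\<bar>)\<bar> \<le> ?g x" for x
    by (cases "y \<le> x") (auto simp: h_def)
  then have "integrable lborel (\<lambda>x. exp (- c * \<bar>x - y\<bar>))
      \<and> (\<integral>x. exp (- c * \<bar>x - y\<bar>) \<partial>lborel) \<le> integral\<^sup>L lborel ?g"
    by (intro integrable_integral_le_dominated g continuous_intros)
  then show "integrable lborel (\<lambda>x. exp (- c * \<bar>x - y\<bar>))"
    and "(\<integral>x. exp (- c * \<bar>x - y\<bar>) \<partial>lborel) \<le> 2 / c"
    using g(2) by auto
qed

lemma square_add_le: "((a::real) + b)\<^sup>2 \<le> 2 * (a\<^sup>2 + b\<^sup>2)"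
  using zero_le_power2[of "a - b"] by (simp add: power2_eq_square algebra_simps)

lemma square_add3_le: "((a::real) + b + c)\<^sup>2 \<le> 3 * (a\<^sup>2 + b\<^sup>2 + c\<^sup>2)"
  using zero_le_power2[of "a - b"] zero_le_power2[of "b - c"] zero_le_power2[of "a - c"]
  by (simp add: power2_eq_square algebra_simps)

lemma norm_add_sq_le: "(norm (a + b))\<^sup>2 \<le> 2 * ((norm a)\<^sup>2 + (norm (b :: 'a :: real_normed_vector))\<^sup>2)"
proof -
  have "(norm (a + b))\<^sup>2 \<le> (norm a + norm b)\<^sup>2"
    by (intro power_mono norm_triangle_ineq) simp
  also have "\<dots> \<le> 2 * ((norm a)\<^sup>2 + (norm b)\<^sup>2)"
    by (rule square_add_le)
  finally show ?thesis .
qed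

lemma norm_add_sq_eq: "(norm (a + b))\<^sup>2 = (norm a)\<^sup>2 + (norm (b :: 'a :: real_inner))\<^sup>2 + 2 * inner a b"
  by (simp add: power2_norm_eq_inner inner_add_left inner_add_right inner_commute)

text \<open>On \<open>[-y\<^sub>0, y\<^sub>0]\<close> both factors are small; beyond \<open>y\<^sub>0\<close> only \<open>b\<close> is, beyond \<open>-y\<^sub>0\<close> only \<open>a\<close>.\<close>

lemma separated_product_le:
  fixes a b :: real
  assumes "0 \<le> a" "a \<le> A" "0 \<le> b" "b \<le> A" "0 \<le> y0"
    and left: "x \<le> y0 \<Longrightarrow> a \<le> A * exp (- G * (y0 - x))"
    and right: "- y0 \<le> x \<Longrightarrow> b \<le> A * exp (- G * (x + y0))"
  shows "a * b \<le> A\<^sup>2 * exp (- 2 * G * y0)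
    * (indicator {- y0..y0} x + exp (- G * \<bar>x - y0\<bar>) + exp (- G * \<bar>x + y0\<bar>))"
proof -
  define E where "E = exp (- 2 * G * y0)"
  have A: "0 \<le> A" using assms(1,2) by linarith
  have AE: "0 \<le> A\<^sup>2 * E" by (simp add: E_def)
  consider "- y0 \<le> x \<and> x \<le> y0" | "y0 < x" | "x < - y0" by linarith
  then show ?thesis
  proof cases
    case 1
    then have "a * b \<le> (A * exp (- G * (y0 - x))) * (A * exp (- G * (x + y0)))"
      using assms(1,3) left right A by (intro mult_mono) auto
    also have "\<dots> = A\<^sup>2 * E * 1"
      by (simp add: E_def power2_eq_square algebra_simps flip: exp_add)
    also have "\<dots> \<le> A\<^sup>2 * E * (indicator {- y0..y0} x + exp (- G * \<bar>x - y0\<bar>) + exp (- G * \<bar>x + y0\<bar>))"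
      using 1 AE by (intro mult_left_mono) (simp_all add: add_nonneg_nonneg)
    finally show ?thesis unfolding E_def .
  next
    case 2
    then have "a * b \<le> A * (A * exp (- G * (x + y0)))"
      using assms(1-4) A right \<open>0 \<le> y0\<close> by (intro mult_mono) auto
    also have "\<dots> = A\<^sup>2 * E * exp (- G * \<bar>x - y0\<bar>)"
      using 2 by (simp add: E_def power2_eq_square algebra_simps flip: exp_add)
    also have "\<dots> \<le> A\<^sup>2 * E * (indicator {- y0..y0} x + exp (- G * \<bar>x - y0\<bar>) + exp (- G * \<bar>x + y0\<bar>))"
      using AE by (intro mult_left_mono) simp_all
    finally show ?thesis unfolding E_def .
  next
    case 3
    then have "a * b \<le> (A * exp (- G * (y0 - x))) * A"
      using assms(1-4) left \<open>0 \<le> y0\<close> A by (intro mult_mono) auto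
    also have "\<dots> = A\<^sup>2 * E * exp (- G * \<bar>x + y0\<bar>)"
      using 3 by (simp add: E_def power2_eq_square algebra_simps flip: exp_add)
    also have "\<dots> \<le> A\<^sup>2 * E * (indicator {- y0..y0} x + exp (- G * \<bar>x - y0\<bar>) + exp (- G * \<bar>x + y0\<bar>))"
      using AE by (intro mult_left_mono) simp_all
    finally show ?thesis unfolding E_def .
  qed
qed

lemma integral_separated_product_le:
  fixes \<alpha> \<beta> :: "real \<Rightarrow> real"
  assumes "continuous_on UNIV \<alpha>" "continuous_on UNIV \<beta>" and "0 < G" "0 \<le> y0"
    and "\<And>x. 0 \<le> \<alpha> x" "\<And>x. \<alpha> x \<le> A" "\<And>x. 0 \<le> \<beta> x" "\<And>x. \<beta> x \<le> A"
    and "\<And>x. x \<le> y0 \<Longrightarrow> \<alpha> x \<le> A * exp (- G * (y0 - x))"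
    and "\<And>x. - y0 \<le> x \<Longrightarrow> \<beta> x \<le> A * exp (- G * (x + y0))"
  shows "integrable lborel (\<lambda>x. \<alpha> x * \<beta> x)
    \<and> (\<integral>x. \<alpha> x * \<beta> x \<partial>lborel) \<le> A\<^sup>2 * exp (- 2 * G * y0) * (2 * y0 + 4 / G)"
proof -
  define E where "E = exp (- 2 * G * y0)"
  define e where "e y x = exp (- G * \<bar>x - y\<bar>)" for y x
  define I where "I = (indicator {- y0..y0} :: real \<Rightarrow> real)"
  define B where "B x = A\<^sup>2 * E * (I x + e y0 x + e (- y0) x)" for x
  have e: "integrable lborel (e y)" "integral\<^sup>L lborel (e y) \<le> 2 / G" for y
    unfolding e_def using integrable_exp_neg_abs[OF \<open>0 < G\<close>] integral_exp_neg_abs_le[OF \<open>0 < G\<close>]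
    by auto
  have I: "integrable lborel I" "integral\<^sup>L lborel I = 2 * y0"
    using \<open>0 \<le> y0\<close> by (auto simp: I_def integrable_indicator_iff)
  have "integrable lborel B"
    using e(1) I(1) by (simp add: B_def[abs_def])
  moreover have "\<bar>\<alpha> x * \<beta> x\<bar> \<le> B x" for x
    using separated_product_le[of "\<alpha> x" A "\<beta> x" y0 x G] assms(4-10)
    by (simp add: B_def E_def e_def I_def)
  ultimately have dominated: "integrable lborel (\<lambda>x. \<alpha> x * \<beta> x)
      \<and> (\<integral>x. \<alpha> x * \<beta> x \<partial>lborel) \<le> integral\<^sup>L lborel B"
    using assms(1,2) by (intro integrable_integral_le_dominated continuous_intros)
  have "integral\<^sup>L lborel B = A\<^sup>2 * E * (2 * y0 + integral\<^sup>L lborel (e y0) + integral\<^sup>L lborel (e (- y0)))"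
    using e(1) I unfolding B_def[abs_def] by simp
  also have "\<dots> \<le> A\<^sup>2 * E * (2 * y0 + 2 / G + 2 / G)"
    using e(2) by (intro mult_left_mono add_mono) (simp_all add: E_def)
  also have "\<dots> = A\<^sup>2 * exp (- 2 * G * y0) * (2 * y0 + 4 / G)"
    by (simp add: E_def)
  finally show ?thesis
    using dominated by auto
qed

section \<open>Exponentially localised kinks\<close>

locale kink_profile =
  fixes f f' :: "real \<Rightarrow> real^3" and G K lm lp :: real
  assumes G_pos: "0 < G" and K_pos: "0 < K"
    and has_vector_derivative: "\<And>z. (f has_vector_derivative f' z) (at z)"
    and right_tail: "\<And>z. 0 \<le> z \<Longrightarrow> norm (f z - lp *\<^sub>R e1) \<le> K * exp (- G * z)"
    and left_tail: "\<And>z. z \<le> 0 \<Longrightarrow> norm (f z - lm *\<^sub>R e1) \<le> K * exp (G * z)"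
    and deriv_decay: "\<And>z. norm (f' z) \<le> K * exp (- G * \<bar>z\<bar>)"
begin

lemma tail_decay: "norm (f z - (if 0 \<le> z then lp else lm) *\<^sub>R e1) \<le> K * exp (- G * \<bar>z\<bar>)"
  using right_tail[of z] left_tail[of z] by (cases "0 \<le> z") simp_all

lemma continuous_on_act: "continuous_on S (act g f)"
  using act_has_vector_derivative[OF has_vector_derivative]
  by (meson continuous_at_imp_continuous_on has_vector_derivative_continuous)

lemma act_tail_decay:
  "norm (act g f x - (if 0 \<le> x - fst g then lp else lm) *\<^sub>R e1) \<le> K * exp (- G * \<bar>x - fst g\<bar>)"
  unfolding act_sub_axis norm_rot by (rule tail_decay)

lemma norm_act_le: "norm (act g f x) \<le> K + \<bar>lp\<bar> + \<bar>lm\<bar>"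
proof -
  define l where "l = (if 0 \<le> x - fst g then lp else lm)"
  have "norm (act g f x) \<le> norm (act g f x - l *\<^sub>R e1) + \<bar>l\<bar>"
    using norm_triangle_sub[of "act g f x" "l *\<^sub>R e1"] by simp
  moreover have "K * exp (- G * \<bar>x - fst g\<bar>) \<le> K"
    using G_pos K_pos by (intro mult_left_le) simp_all
  then have "norm (act g f x - l *\<^sub>R e1) \<le> K"
    using act_tail_decay[of g x] unfolding l_def by linarith
  moreover have "\<bar>l\<bar> \<le> \<bar>lp\<bar> + \<bar>lm\<bar>" by (simp add: l_def)
  ultimately show ?thesis by linarith
qed

lemma norm_act_diff_le_tails:
  "norm (act g1 f x - act g3 f x)
    \<le> K * exp (- G * \<bar>x - fst g1\<bar>)
      + \<bar>lp - lm\<bar> * indicator {min (fst g1) (fst g3)..max (fst g1) (fst g3)} x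
      + K * exp (- G * \<bar>x - fst g3\<bar>)"
proof -
  define l1 l3 where "l1 = (if 0 \<le> x - fst g1 then lp else lm)"
    and "l3 = (if 0 \<le> x - fst g3 then lp else lm)"
  have "act g1 f x - act g3 f x = ((act g1 f x - l1 *\<^sub>R e1) + (l1 - l3) *\<^sub>R e1) - (act g3 f x - l3 *\<^sub>R e1)"
    by (simp add: algebra_simps)
  then have "norm (act g1 f x - act g3 f x)
      \<le> norm ((act g1 f x - l1 *\<^sub>R e1) + (l1 - l3) *\<^sub>R e1) + norm (act g3 f x - l3 *\<^sub>R e1)"
    by (simp only: norm_triangle_ineq4)
  also have "\<dots> \<le> norm (act g1 f x - l1 *\<^sub>R e1) + \<bar>l1 - l3\<bar> + norm (act g3 f x - l3 *\<^sub>R e1)"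
    using norm_triangle_ineq[of "act g1 f x - l1 *\<^sub>R e1" "(l1 - l3) *\<^sub>R e1"] by simp
  finally have "norm (act g1 f x - act g3 f x)
      \<le> norm (act g1 f x - l1 *\<^sub>R e1) + \<bar>l1 - l3\<bar> + norm (act g3 f x - l3 *\<^sub>R e1)" .
  moreover have "\<bar>l1 - l3\<bar> \<le> \<bar>lp - lm\<bar> * indicator {min (fst g1) (fst g3)..max (fst g1) (fst g3)} x"
    by (auto simp: l1_def l3_def indicator_def abs_minus_commute)
  ultimately show ?thesis
    using act_tail_decay[of g1 x] act_tail_decay[of g3 x] unfolding l1_def l3_def by linarith
qed

lemma norm_sub_shift_le:
  assumes "\<bar>h\<bar> \<le> 1"
  shows "norm (f (z + h) - f z) \<le> K * exp G * \<bar>h\<bar> * exp (- G * \<bar>z\<bar>)"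
proof -
  have "onorm (\<lambda>t. t *\<^sub>R f' \<xi>) \<le> K * exp G * exp (- G * \<bar>z\<bar>)"
    if "\<xi> \<in> closed_segment z (z + h)" for \<xi>
  proof -
    have "\<bar>z\<bar> \<le> \<bar>\<xi>\<bar> + 1"
      using segment_bound1[OF that] assms by (simp add: dist_real_def)
    then have "G * \<bar>z\<bar> \<le> G * (\<bar>\<xi>\<bar> + 1)"
      using G_pos by (intro mult_left_mono) simp_all
    then have "exp (- G * \<bar>\<xi>\<bar>) \<le> exp G * exp (- G * \<bar>z\<bar>)"
      by (simp flip: exp_add add: algebra_simps)
    then have "K * exp (- G * \<bar>\<xi>\<bar>) \<le> K * exp G * exp (- G * \<bar>z\<bar>)"
      using K_pos by (simp add: mult.assoc)
    then show ?thesis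
      using deriv_decay[of \<xi>] by (simp add: onorm_scaleR_left[OF bounded_linear_ident] onorm_id)
  qed
  then have "norm (f (z + h) - f z) \<le> K * exp G * exp (- G * \<bar>z\<bar>) * norm (z + h - z)"
    using has_vector_derivative
    by (intro differentiable_bound[where S = "closed_segment z (z + h)"])
      (auto simp: has_vector_derivative_def intro: has_derivative_at_withinI)
  then show ?thesis by (simp add: mult_ac)
qed

lemma norm_act_diff_le_near:
  assumes "\<bar>fst g1 - fst g3\<bar> \<le> 1"
  shows "norm (act g1 f x - act g3 f x)
    \<le> K * exp G * \<bar>fst g1 - fst g3\<bar> * exp (- G * \<bar>x - fst g1\<bar>)
      + K * infdist (snd g1 - snd g3) (range (\<lambda>k::int. 2 * pi * of_int k)) * exp (- G * \<bar>x - fst g3\<bar>)"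
proof -
  define z1 z3 where "z1 = x - fst g1" and "z3 = x - fst g3"
  define d where "d = infdist (snd g1 - snd g3) (range (\<lambda>k::int. 2 * pi * of_int k))"
  have "act g1 f x - act g3 f x = rot (snd g1) (f z1 - f z3) + (rot (snd g1) (f z3) - rot (snd g3) (f z3))"
    by (simp add: act_def z1_def z3_def rot_diff)
  then have "norm (act g1 f x - act g3 f x)
      \<le> norm (f z1 - f z3) + norm (rot (snd g1) (f z3) - rot (snd g3) (f z3))"
    by (metis norm_rot norm_triangle_ineq)
  moreover have "norm (f z1 - f z3) \<le> K * exp G * \<bar>fst g1 - fst g3\<bar> * exp (- G * \<bar>z1\<bar>)"
    using norm_sub_shift_le[of "fst g1 - fst g3" z1] assms
    by (simp add: z1_def z3_def norm_minus_commute)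
  moreover have "norm (rot (snd g1) (f z3) - rot (snd g3) (f z3))
      \<le> d * norm (f z3 - (if 0 \<le> z3 then lp else lm) *\<^sub>R e1)"
    unfolding d_def by (rule norm_rot_sub_rot_le)
  moreover have "d * norm (f z3 - (if 0 \<le> z3 then lp else lm) *\<^sub>R e1) \<le> d * (K * exp (- G * \<bar>z3\<bar>))"
    by (intro mult_left_mono tail_decay) (simp add: d_def infdist_nonneg)
  ultimately show ?thesis
    unfolding z1_def z3_def d_def by (simp add: mult_ac)
qed

lemma norm_act_diff_left:
  assumes "y0 \<le> fst g1" "y0 \<le> fst g3" "x \<le> y0"
  shows "norm (act g1 f x - act g3 f x) \<le> 2 * K * exp (- G * (y0 - x))"
proof -
  have "norm (act g f x - lm *\<^sub>R e1) \<le> K * exp (- G * (y0 - x))" if "y0 \<le> fst g" for g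
  proof -
    have "norm (act g f x - lm *\<^sub>R e1) \<le> K * exp (G * (x - fst g))"
      unfolding act_sub_axis norm_rot using that assms(3) by (intro left_tail) simp
    also have "\<dots> \<le> K * exp (- G * (y0 - x))"
      using that G_pos K_pos by (simp add: mult_left_mono algebra_simps)
    finally show ?thesis .
  qed
  from this[OF assms(1)] this[OF assms(2)] show ?thesis
    using norm_triangle_ineq4[of "act g1 f x - lm *\<^sub>R e1" "act g3 f x - lm *\<^sub>R e1"] by simp
qed

lemma norm_act_diff_right:
  assumes "fst g1 \<le> - y0" "fst g3 \<le> - y0" "- y0 \<le> x"
  shows "norm (act g1 f x - act g3 f x) \<le> 2 * K * exp (- G * (x + y0))"
proof -
  have "norm (act g f x - lp *\<^sub>R e1) \<le> K * exp (- G * (x + y0))" if "fst g \<le> - y0" for g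
  proof -
    have "norm (act g f x - lp *\<^sub>R e1) \<le> K * exp (- G * (x - fst g))"
      unfolding act_sub_axis norm_rot using that assms(3) by (intro right_tail) simp
    also have "\<dots> \<le> K * exp (- G * (x + y0))"
      using that G_pos K_pos by (simp add: mult_left_mono)
    finally show ?thesis .
  qed
  from this[OF assms(1)] this[OF assms(2)] show ?thesis
    using norm_triangle_ineq4[of "act g1 f x - lp *\<^sub>R e1" "act g3 f x - lp *\<^sub>R e1"] by simp
qed

lemma norm_act_diff_le: "norm (act g1 f x - act g3 f x) \<le> 2 * (K + \<bar>lp\<bar> + \<bar>lm\<bar>)"
proof -
  have "norm (act g1 f x - act g3 f x) \<le> norm (act g1 f x) + norm (act g3 f x)"
    by (rule norm_triangle_ineq4)
  also have "\<dots> \<le> (K + \<bar>lp\<bar> + \<bar>lm\<bar>) + (K + \<bar>lp\<bar> + \<bar>lm\<bar>)"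
    by (intro add_mono norm_act_le)
  finally show ?thesis by simp
qed

lemma continuous_on_act_diff_sq [continuous_intros]:
  "continuous_on S (\<lambda>x. (norm (act g1 f x - act g3 f x))\<^sup>2)"
  by (intro continuous_intros continuous_on_act)

lemma exp_decay_sq: "(c * exp (- G * \<bar>x - y\<bar>))\<^sup>2 = c\<^sup>2 * exp (- (2 * G) * \<bar>x - y\<bar>)"
  by (simp add: power_mult_distrib power2_eq_square flip: exp_add)

lemma
  shows integrable_exp_decay2: "integrable lborel (\<lambda>x. exp (- (2 * G) * \<bar>x - y\<bar>))"
    and integral_exp_decay2_le: "(\<integral>x. exp (- (2 * G) * \<bar>x - y\<bar>) \<partial>lborel) \<le> 1 / G"
  using integrable_exp_neg_abs[of "2 * G" y] integral_exp_neg_abs_le[of "2 * G" y] G_pos by simp_all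

lemma act_diff_sq_le_tails:
  "(norm (act g1 f x - act g3 f x))\<^sup>2
    \<le> 3 * (K\<^sup>2 * exp (- (2 * G) * \<bar>x - fst g1\<bar>)
      + (lp - lm)\<^sup>2 * indicator {min (fst g1) (fst g3)..max (fst g1) (fst g3)} x
      + K\<^sup>2 * exp (- (2 * G) * \<bar>x - fst g3\<bar>))"
proof -
  define I where "I = (indicator {min (fst g1) (fst g3)..max (fst g1) (fst g3)} :: real \<Rightarrow> real)"
  have "(norm (act g1 f x - act g3 f x))\<^sup>2
      \<le> (K * exp (- G * \<bar>x - fst g1\<bar>) + \<bar>lp - lm\<bar> * I x + K * exp (- G * \<bar>x - fst g3\<bar>))\<^sup>2"
    unfolding I_def by (intro power_mono norm_act_diff_le_tails) simp
  also have "\<dots> \<le> 3 * ((K * exp (- G * \<bar>x - fst g1\<bar>))\<^sup>2 + (\<bar>lp - lm\<bar> * I x)\<^sup>2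
      + (K * exp (- G * \<bar>x - fst g3\<bar>))\<^sup>2)"
    by (rule square_add3_le)
  also have "(\<bar>lp - lm\<bar> * I x)\<^sup>2 = (lp - lm)\<^sup>2 * I x"
    by (simp add: I_def indicator_def power_mult_distrib)
  finally show ?thesis
    unfolding exp_decay_sq I_def .
qed

lemma act_diff_sq_integral_far:
  assumes "1 \<le> \<bar>fst g1 - fst g3\<bar>"
  shows "integrable lborel (\<lambda>x. (norm (act g1 f x - act g3 f x))\<^sup>2)
    \<and> (\<integral>x. (norm (act g1 f x - act g3 f x))\<^sup>2 \<partial>lborel)
      \<le> (6 * K\<^sup>2 / G + 3 * (lp - lm)\<^sup>2) * (fst g1 - fst g3)\<^sup>2"
proof -
  define h where "h = fst g1 - fst g3"
  define E where "E y x = exp (- (2 * G) * \<bar>x - y\<bar>)" for y x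
  define I where "I = (indicator {min (fst g1) (fst g3)..max (fst g1) (fst g3)} :: real \<Rightarrow> real)"
  define B where "B x = 3 * (K\<^sup>2 * E (fst g1) x + (lp - lm)\<^sup>2 * I x + K\<^sup>2 * E (fst g3) x)" for x
  have E: "integrable lborel (E y)" "integral\<^sup>L lborel (E y) \<le> 1 / G" for y
    unfolding E_def by (rule integrable_exp_decay2, rule integral_exp_decay2_le)
  have I: "integrable lborel I" "integral\<^sup>L lborel I = \<bar>h\<bar>"
    by (auto simp: I_def h_def integrable_indicator_iff)
  have "integrable lborel B"
    using E(1) I(1) by (simp add: B_def[abs_def])
  moreover have "\<bar>(norm (act g1 f x - act g3 f x))\<^sup>2\<bar> \<le> B x" for x
    using act_diff_sq_le_tails[of g1 x g3] by (simp add: B_def E_def I_def)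
  ultimately have "integrable lborel (\<lambda>x. (norm (act g1 f x - act g3 f x))\<^sup>2)
      \<and> (\<integral>x. (norm (act g1 f x - act g3 f x))\<^sup>2 \<partial>lborel) \<le> integral\<^sup>L lborel B"
    by (intro integrable_integral_le_dominated continuous_intros)
  moreover have "integral\<^sup>L lborel B
      = 3 * (K\<^sup>2 * integral\<^sup>L lborel (E (fst g1)) + (lp - lm)\<^sup>2 * \<bar>h\<bar> + K\<^sup>2 * integral\<^sup>L lborel (E (fst g3)))"
    using E(1) I unfolding B_def[abs_def] by simp
  moreover have "\<dots> \<le> 3 * (K\<^sup>2 * (1 / G) + (lp - lm)\<^sup>2 * \<bar>h\<bar> + K\<^sup>2 * (1 / G))"
    using E(2) by (intro mult_left_mono add_mono) simp_all
  moreover have "3 * (K\<^sup>2 * (1 / G) + (lp - lm)\<^sup>2 * \<bar>h\<bar> + K\<^sup>2 * (1 / G))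
      \<le> (6 * K\<^sup>2 / G + 3 * (lp - lm)\<^sup>2) * h\<^sup>2"
  proof -
    have "\<bar>h\<bar> * 1 \<le> \<bar>h\<bar> * \<bar>h\<bar>"
      using assms by (intro mult_left_mono) (simp_all add: h_def)
    then have "\<bar>h\<bar> \<le> h\<^sup>2"
      by (metis power2_abs power2_eq_square mult_1_right)
    moreover have "1 \<le> \<bar>h\<bar>" using assms by (simp add: h_def)
    ultimately have "1 \<le> h\<^sup>2" "\<bar>h\<bar> \<le> h\<^sup>2" by simp_all
    then have "6 * K\<^sup>2 / G * 1 \<le> 6 * K\<^sup>2 / G * h\<^sup>2" "(lp - lm)\<^sup>2 * \<bar>h\<bar> \<le> (lp - lm)\<^sup>2 * h\<^sup>2"
      using G_pos by (intro mult_left_mono; simp)+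
    then show ?thesis by (simp add: algebra_simps)
  qed
  ultimately show ?thesis unfolding h_def by linarith
qed

lemma act_diff_sq_le_near:
  assumes "\<bar>fst g1 - fst g3\<bar> \<le> 1"
  shows "(norm (act g1 f x - act g3 f x))\<^sup>2
    \<le> 2 * ((K * exp G * \<bar>fst g1 - fst g3\<bar>)\<^sup>2 * exp (- (2 * G) * \<bar>x - fst g1\<bar>)
      + (K * infdist (snd g1 - snd g3) (range (\<lambda>k::int. 2 * pi * of_int k)))\<^sup>2
        * exp (- (2 * G) * \<bar>x - fst g3\<bar>))"
proof -
  define d where "d = infdist (snd g1 - snd g3) (range (\<lambda>k::int. 2 * pi * of_int k))"
  have "(norm (act g1 f x - act g3 f x))\<^sup>2
      \<le> ((K * exp G * \<bar>fst g1 - fst g3\<bar>) * exp (- G * \<bar>x - fst g1\<bar>)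
        + (K * d) * exp (- G * \<bar>x - fst g3\<bar>))\<^sup>2"
    using norm_act_diff_le_near[OF assms, of x] unfolding d_def
    by (intro power_mono) (simp_all add: mult.assoc)
  also have "\<dots> \<le> 2 * (((K * exp G * \<bar>fst g1 - fst g3\<bar>) * exp (- G * \<bar>x - fst g1\<bar>))\<^sup>2
      + ((K * d) * exp (- G * \<bar>x - fst g3\<bar>))\<^sup>2)"
    by (rule square_add_le)
  finally show ?thesis
    unfolding exp_decay_sq d_def .
qed

lemma act_diff_sq_integral_near:
  assumes "\<bar>fst g1 - fst g3\<bar> \<le> 1"
  shows "integrable lborel (\<lambda>x. (norm (act g1 f x - act g3 f x))\<^sup>2)
    \<and> (\<integral>x. (norm (act g1 f x - act g3 f x))\<^sup>2 \<partial>lborel)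
      \<le> 2 * K\<^sup>2 * exp (2 * G) / G * (gnorm (g1 - g3))\<^sup>2"
proof -
  define h where "h = fst g1 - fst g3"
  define d where "d = infdist (snd g1 - snd g3) (range (\<lambda>k::int. 2 * pi * of_int k))"
  define E where "E y x = exp (- (2 * G) * \<bar>x - y\<bar>)" for y x
  define B where "B x = 2 * ((K * exp G * \<bar>h\<bar>)\<^sup>2 * E (fst g1) x + (K * d)\<^sup>2 * E (fst g3) x)" for x
  have E: "integrable lborel (E y)" "integral\<^sup>L lborel (E y) \<le> 1 / G" for y
    unfolding E_def by (rule integrable_exp_decay2, rule integral_exp_decay2_le)
  have "integrable lborel B"
    using E(1) by (simp add: B_def[abs_def])
  moreover have "\<bar>(norm (act g1 f x - act g3 f x))\<^sup>2\<bar> \<le> B x" for x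
    using act_diff_sq_le_near[OF assms, of x] by (simp add: B_def E_def h_def d_def)
  ultimately have "integrable lborel (\<lambda>x. (norm (act g1 f x - act g3 f x))\<^sup>2)
      \<and> (\<integral>x. (norm (act g1 f x - act g3 f x))\<^sup>2 \<partial>lborel) \<le> integral\<^sup>L lborel B"
    by (intro integrable_integral_le_dominated continuous_intros)
  moreover have "integral\<^sup>L lborel B
      = 2 * ((K * exp G * \<bar>h\<bar>)\<^sup>2 * integral\<^sup>L lborel (E (fst g1)) + (K * d)\<^sup>2 * integral\<^sup>L lborel (E (fst g3)))"
    using E(1) unfolding B_def[abs_def] by simp
  moreover have "\<dots> \<le> 2 * ((K * exp G * \<bar>h\<bar>)\<^sup>2 * (1 / G) + (K * d)\<^sup>2 * (1 / G))"
    using E(2) by (intro mult_left_mono add_mono) simp_all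
  moreover have "\<dots> = 2 * ((K * exp G * \<bar>h\<bar>)\<^sup>2 + (K * d)\<^sup>2) / G"
    by (simp add: add_divide_distrib)
  moreover have "(K * exp G * \<bar>h\<bar>)\<^sup>2 + (K * d)\<^sup>2 \<le> K\<^sup>2 * exp (2 * G) * (\<bar>h\<bar> + d)\<^sup>2"
  proof -
    have "K\<^sup>2 * d\<^sup>2 \<le> K\<^sup>2 * exp (2 * G) * d\<^sup>2"
      using G_pos by (intro mult_right_mono) (simp_all add: mult_le_cancel_left1)
    moreover have "h\<^sup>2 + d\<^sup>2 \<le> (\<bar>h\<bar> + d)\<^sup>2"
      by (simp add: power2_sum d_def infdist_nonneg)
    then have "K\<^sup>2 * exp (2 * G) * (h\<^sup>2 + d\<^sup>2) \<le> K\<^sup>2 * exp (2 * G) * (\<bar>h\<bar> + d)\<^sup>2"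
      by (intro mult_left_mono) simp_all
    ultimately show ?thesis
      by (simp add: power_mult_distrib algebra_simps flip: exp_double)
  qed
  then have "2 * ((K * exp G * \<bar>h\<bar>)\<^sup>2 + (K * d)\<^sup>2) / G \<le> 2 * K\<^sup>2 * exp (2 * G) / G * (\<bar>h\<bar> + d)\<^sup>2"
    using G_pos by (simp add: divide_right_mono)
  ultimately show ?thesis
    unfolding gnorm_def h_def d_def by simp
qed

definition lipschitz_const :: real where
  "lipschitz_const = 6 * K\<^sup>2 * exp (2 * G) / G + 3 * (lp - lm)\<^sup>2"

lemma lipschitz_const_pos: "0 < lipschitz_const"
  using G_pos K_pos by (simp add: lipschitz_const_def add_pos_nonneg)

lemma act_diff_sq_integral:
  "integrable lborel (\<lambda>x. (norm (act g1 f x - act g3 f x))\<^sup>2)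
    \<and> (\<integral>x. (norm (act g1 f x - act g3 f x))\<^sup>2 \<partial>lborel) \<le> lipschitz_const * (gnorm (g1 - g3))\<^sup>2"
proof (cases "\<bar>fst g1 - fst g3\<bar> \<le> 1")
  case True
  have "2 * K\<^sup>2 * exp (2 * G) / G \<le> 6 * K\<^sup>2 * exp (2 * G) / G"
    using G_pos by (intro divide_right_mono) simp_all
  then have "2 * K\<^sup>2 * exp (2 * G) / G \<le> lipschitz_const"
    using zero_le_power2[of "lp - lm"] unfolding lipschitz_const_def by linarith
  then have "2 * K\<^sup>2 * exp (2 * G) / G * (gnorm (g1 - g3))\<^sup>2 \<le> lipschitz_const * (gnorm (g1 - g3))\<^sup>2"
    by (rule mult_right_mono) simp
  with act_diff_sq_integral_near[OF True] show ?thesis by linarith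
next
  case False
  have "6 * K\<^sup>2 / G \<le> 6 * K\<^sup>2 * exp (2 * G) / G"
    using G_pos by (intro divide_right_mono) (simp_all add: mult_le_cancel_left1)
  then have "6 * K\<^sup>2 / G + 3 * (lp - lm)\<^sup>2 \<le> lipschitz_const"
    by (simp add: lipschitz_const_def)
  moreover have "\<bar>fst g1 - fst g3\<bar> \<le> gnorm (g1 - g3)"
    by (simp add: gnorm_def infdist_nonneg)
  then have "\<bar>fst g1 - fst g3\<bar>\<^sup>2 \<le> (gnorm (g1 - g3))\<^sup>2"
    by (rule power_mono) simp
  then have "(fst g1 - fst g3)\<^sup>2 \<le> (gnorm (g1 - g3))\<^sup>2"
    by simp
  ultimately have "(6 * K\<^sup>2 / G + 3 * (lp - lm)\<^sup>2) * (fst g1 - fst g3)\<^sup>2 \<le> lipschitz_const * (gnorm (g1 - g3))\<^sup>2"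
    using lipschitz_const_pos by (intro mult_mono) simp_all
  with act_diff_sq_integral_far[of g1 g3] False show ?thesis by linarith
qed

end

lemma separated_kinks_product_integral:
  assumes f: "kink_profile f f' G K lmf lpf" and h: "kink_profile h h' G K lmh lph"
    and "0 \<le> y0" "y0 \<le> fst g1" "y0 \<le> fst g3" "fst g2 \<le> - y0" "fst g4 \<le> - y0"
    and A: "2 * (K + \<bar>lpf\<bar> + \<bar>lmf\<bar>) \<le> A" "2 * (K + \<bar>lph\<bar> + \<bar>lmh\<bar>) \<le> A"
  shows "integrable lborel (\<lambda>x. norm (act g1 f x - act g3 f x) * norm (act g2 h x - act g4 h x))
    \<and> (\<integral>x. norm (act g1 f x - act g3 f x) * norm (act g2 h x - act g4 h x) \<partial>lborel)
      \<le> A\<^sup>2 * exp (- 2 * G * y0) * (2 * y0 + 4 / G)"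
proof -
  interpret f: kink_profile f f' G K lmf lpf by (rule f)
  interpret h: kink_profile h h' G K lmh lph by (rule h)
  have "2 * K \<le> A" using A(1) by simp
  show ?thesis
  proof (rule integral_separated_product_le)
    show "continuous_on UNIV (\<lambda>x. norm (act g1 f x - act g3 f x))"
      "continuous_on UNIV (\<lambda>x. norm (act g2 h x - act g4 h x))"
      by (intro continuous_intros f.continuous_on_act h.continuous_on_act)+
    show "norm (act g1 f x - act g3 f x) \<le> A" "norm (act g2 h x - act g4 h x) \<le> A" for x
      using f.norm_act_diff_le[of g1 x g3] h.norm_act_diff_le[of g2 x g4] A by linarith+
    have scale: "2 * K * exp t \<le> A * exp t" for t
      using \<open>2 * K \<le> A\<close> by (rule mult_right_mono) simp
    show "norm (act g1 f x - act g3 f x) \<le> A * exp (- G * (y0 - x))" if "x \<le> y0" for x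
      using f.norm_act_diff_left[OF assms(4,5) that] scale[of "- G * (y0 - x)"] by linarith
    show "norm (act g2 h x - act g4 h x) \<le> A * exp (- G * (x + y0))" if "- y0 \<le> x" for x
      using h.norm_act_diff_right[OF assms(6,7) that] scale[of "- G * (x + y0)"] by linarith
  qed (use f.G_pos \<open>0 \<le> y0\<close> in auto)
qed

section \<open>\<open>H\<^sup>1\<close> estimates for kinks and pairs of kinks\<close>

lemma H1norm_eq:
  assumes "\<And>x. (f has_vector_derivative f' x) (at x)"
  shows "H1norm f = sqrt (\<integral>x. (norm (f x))\<^sup>2 + (norm (f' x))\<^sup>2 \<partial>lborel)"
  unfolding H1norm_def using vector_derivative_at[OF assms] by simp

locale kink_H1 = val: kink_profile f f' G K lm lp + deriv: kink_profile f' f'' G K 0 0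
  for f f' f'' :: "real \<Rightarrow> real^3" and G K lm lp :: real
begin

lemma H1norm_act_diff:
  "H1norm (\<lambda>x. act g1 f x - act g3 f x)
    = sqrt (\<integral>x. (norm (act g1 f x - act g3 f x))\<^sup>2 + (norm (act g1 f' x - act g3 f' x))\<^sup>2 \<partial>lborel)"
  by (intro H1norm_eq has_vector_derivative_diff act_has_vector_derivative val.has_vector_derivative)

lemma H1_integrand_act_diff_integral:
  "integrable lborel (\<lambda>x. (norm (act g1 f x - act g3 f x))\<^sup>2 + (norm (act g1 f' x - act g3 f' x))\<^sup>2)
    \<and> (\<integral>x. (norm (act g1 f x - act g3 f x))\<^sup>2 + (norm (act g1 f' x - act g3 f' x))\<^sup>2 \<partial>lborel)
      \<le> (val.lipschitz_const + deriv.lipschitz_const) * (gnorm (g1 - g3))\<^sup>2"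
  using val.act_diff_sq_integral[of g1 g3] deriv.act_diff_sq_integral[of g1 g3]
  by (simp add: algebra_simps)

lemma H1norm_act_diff_sq:
  "(H1norm (\<lambda>x. act g1 f x - act g3 f x))\<^sup>2
    = (\<integral>x. (norm (act g1 f x - act g3 f x))\<^sup>2 + (norm (act g1 f' x - act g3 f' x))\<^sup>2 \<partial>lborel)"
  unfolding H1norm_act_diff by (simp add: Bochner_Integration.integral_nonneg)

end

locale kink_pair = u: kink_H1 u u' u'' G K lmu lpu + v: kink_H1 v v' v'' G K lmv lpv
  for u u' u'' v v' v'' :: "real \<Rightarrow> real^3" and G K lmu lpu lmv lpv :: real
begin

lemma H1norm_sum_act_diff:
  "H1norm (\<lambda>x. (act g1 u x - act g3 u x) + (act g2 v x - act g4 v x))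
    = sqrt (\<integral>x. (norm ((act g1 u x - act g3 u x) + (act g2 v x - act g4 v x)))\<^sup>2
        + (norm ((act g1 u' x - act g3 u' x) + (act g2 v' x - act g4 v' x)))\<^sup>2 \<partial>lborel)"
  by (intro H1norm_eq has_vector_derivative_add has_vector_derivative_diff act_has_vector_derivative
      u.val.has_vector_derivative v.val.has_vector_derivative)

lemma integral_sum_act_diff_sq_le:
  "(\<integral>x. (norm ((act g1 u x - act g3 u x) + (act g2 v x - act g4 v x)))\<^sup>2
      + (norm ((act g1 u' x - act g3 u' x) + (act g2 v' x - act g4 v' x)))\<^sup>2 \<partial>lborel)
    \<le> 2 * ((u.val.lipschitz_const + u.deriv.lipschitz_const) * (gnorm (g1 - g3))\<^sup>2
      + (v.val.lipschitz_const + v.deriv.lipschitz_const) * (gnorm (g2 - g4))\<^sup>2)"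
proof -
  define FA where "FA x = (norm (act g1 u x - act g3 u x))\<^sup>2 + (norm (act g1 u' x - act g3 u' x))\<^sup>2" for x
  define FB where "FB x = (norm (act g2 v x - act g4 v x))\<^sup>2 + (norm (act g2 v' x - act g4 v' x))\<^sup>2" for x
  have A: "integrable lborel FA"
    "integral\<^sup>L lborel FA \<le> (u.val.lipschitz_const + u.deriv.lipschitz_const) * (gnorm (g1 - g3))\<^sup>2"
    using u.H1_integrand_act_diff_integral[of g1 g3] by (simp_all add: FA_def[abs_def])
  have B: "integrable lborel FB"
    "integral\<^sup>L lborel FB \<le> (v.val.lipschitz_const + v.deriv.lipschitz_const) * (gnorm (g2 - g4))\<^sup>2"
    using v.H1_integrand_act_diff_integral[of g2 g4] by (simp_all add: FB_def[abs_def])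
  have "(\<integral>x. (norm ((act g1 u x - act g3 u x) + (act g2 v x - act g4 v x)))\<^sup>2
        + (norm ((act g1 u' x - act g3 u' x) + (act g2 v' x - act g4 v' x)))\<^sup>2 \<partial>lborel)
      \<le> (\<integral>x. 2 * FA x + 2 * FB x \<partial>lborel)"
  proof (rule integral_mono')
    show "integrable lborel (\<lambda>x. 2 * FA x + 2 * FB x)" using A(1) B(1) by simp
    fix x
    show "0 \<le> 2 * FA x + 2 * FB x" by (simp add: FA_def FB_def)
    show "(norm ((act g1 u x - act g3 u x) + (act g2 v x - act g4 v x)))\<^sup>2
        + (norm ((act g1 u' x - act g3 u' x) + (act g2 v' x - act g4 v' x)))\<^sup>2
      \<le> 2 * FA x + 2 * FB x"
      using norm_add_sq_le[of "act g1 u x - act g3 u x" "act g2 v x - act g4 v x"]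
        norm_add_sq_le[of "act g1 u' x - act g3 u' x" "act g2 v' x - act g4 v' x"]
      by (simp add: FA_def FB_def algebra_simps)
  qed
  also have "\<dots> = 2 * integral\<^sup>L lborel FA + 2 * integral\<^sup>L lborel FB"
    using A(1) B(1) by simp
  also have "\<dots> \<le> 2 * ((u.val.lipschitz_const + u.deriv.lipschitz_const) * (gnorm (g1 - g3))\<^sup>2)
      + 2 * ((v.val.lipschitz_const + v.deriv.lipschitz_const) * (gnorm (g2 - g4))\<^sup>2)"
    using A(2) B(2) by (intro add_mono mult_left_mono) simp_all
  finally show ?thesis by (simp only: distrib_left)
qed

definition H1_lipschitz_const :: real where
  "H1_lipschitz_const = sqrt (2 * ((u.val.lipschitz_const + u.deriv.lipschitz_const)
     + (v.val.lipschitz_const + v.deriv.lipschitz_const)))"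

lemma H1_lipschitz_const_pos: "0 < H1_lipschitz_const"
  using u.val.lipschitz_const_pos u.deriv.lipschitz_const_pos
    v.val.lipschitz_const_pos v.deriv.lipschitz_const_pos
  by (simp add: H1_lipschitz_const_def)

lemma H1norm_sum_act_diff_le:
  "H1norm (\<lambda>x. (act g1 u x - act g3 u x) + (act g2 v x - act g4 v x))
    \<le> H1_lipschitz_const * (gnorm (g1 - g3) + gnorm (g2 - g4))"
proof -
  define Cu Cv where "Cu = u.val.lipschitz_const + u.deriv.lipschitz_const"
    and "Cv = v.val.lipschitz_const + v.deriv.lipschitz_const"
  define dA dB where "dA = gnorm (g1 - g3)" and "dB = gnorm (g2 - g4)"
  have d: "0 \<le> dA" "0 \<le> dB" by (simp_all add: dA_def dB_def gnorm_nonneg)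
  have "Cu * dA\<^sup>2 + Cv * dB\<^sup>2 \<le> (Cu + Cv) * (dA + dB)\<^sup>2"
    using d u.val.lipschitz_const_pos u.deriv.lipschitz_const_pos
      v.val.lipschitz_const_pos v.deriv.lipschitz_const_pos
    by (simp add: Cu_def Cv_def power2_sum algebra_simps add_nonneg_nonneg mult_nonneg_nonneg)
  then have "2 * (Cu * dA\<^sup>2 + Cv * dB\<^sup>2) \<le> 2 * ((Cu + Cv) * (dA + dB)\<^sup>2)"
    by simp
  with integral_sum_act_diff_sq_le[of g1 g3 g2 g4]
  have "(\<integral>x. (norm ((act g1 u x - act g3 u x) + (act g2 v x - act g4 v x)))\<^sup>2
        + (norm ((act g1 u' x - act g3 u' x) + (act g2 v' x - act g4 v' x)))\<^sup>2 \<partial>lborel)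
      \<le> 2 * ((Cu + Cv) * (dA + dB)\<^sup>2)"
    unfolding Cu_def Cv_def dA_def dB_def by (rule order_trans)
  then have "H1norm (\<lambda>x. (act g1 u x - act g3 u x) + (act g2 v x - act g4 v x))
      \<le> sqrt (2 * ((Cu + Cv) * (dA + dB)\<^sup>2))"
    unfolding H1norm_sum_act_diff by (rule real_sqrt_le_mono)
  also have "\<dots> = sqrt (2 * (Cu + Cv)) * sqrt ((dA + dB)\<^sup>2)"
    by (simp only: mult.assoc[symmetric] real_sqrt_mult)
  also have "\<dots> = H1_lipschitz_const * (gnorm (g1 - g3) + gnorm (g2 - g4))"
    using d by (simp add: H1_lipschitz_const_def Cu_def Cv_def dA_def dB_def)
  finally show ?thesis .
qed

definition amplitude :: real where
  "amplitude = 2 * (K + \<bar>lpu\<bar> + \<bar>lmu\<bar> + \<bar>lpv\<bar> + \<bar>lmv\<bar>)"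

lemma cross_term_integral:
  assumes "0 \<le> y0" "y0 \<le> fst g1" "y0 \<le> fst g3" "fst g2 \<le> - y0" "fst g4 \<le> - y0"
  shows "integrable lborel (\<lambda>x. inner (act g1 u x - act g3 u x) (act g2 v x - act g4 v x)
        + inner (act g1 u' x - act g3 u' x) (act g2 v' x - act g4 v' x))
    \<and> - (\<integral>x. inner (act g1 u x - act g3 u x) (act g2 v x - act g4 v x)
        + inner (act g1 u' x - act g3 u' x) (act g2 v' x - act g4 v' x) \<partial>lborel)
      \<le> 2 * amplitude\<^sup>2 * exp (- 2 * G * y0) * (2 * y0 + 4 / G)"
proof -
  define X where "X x = inner (act g1 u x - act g3 u x) (act g2 v x - act g4 v x)
      + inner (act g1 u' x - act g3 u' x) (act g2 v' x - act g4 v' x)" for x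
  define P0 where "P0 x = norm (act g1 u x - act g3 u x) * norm (act g2 v x - act g4 v x)" for x
  define P1 where "P1 x = norm (act g1 u' x - act g3 u' x) * norm (act g2 v' x - act g4 v' x)" for x
  have "2 * (K + \<bar>lpu\<bar> + \<bar>lmu\<bar>) \<le> amplitude" "2 * (K + \<bar>lpv\<bar> + \<bar>lmv\<bar>) \<le> amplitude"
    "2 * (K + \<bar>0\<bar> + \<bar>0\<bar>) \<le> amplitude"
    by (simp_all add: amplitude_def)
  then have P0: "integrable lborel P0" "integral\<^sup>L lborel P0 \<le> amplitude\<^sup>2 * exp (- 2 * G * y0) * (2 * y0 + 4 / G)"
    and P1: "integrable lborel P1" "integral\<^sup>L lborel P1 \<le> amplitude\<^sup>2 * exp (- 2 * G * y0) * (2 * y0 + 4 / G)"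
    using separated_kinks_product_integral[OF u.val.kink_profile_axioms v.val.kink_profile_axioms assms]
      separated_kinks_product_integral[OF u.deriv.kink_profile_axioms v.deriv.kink_profile_axioms assms]
    unfolding P0_def[abs_def] P1_def[abs_def] by auto
  have "\<bar>- X x\<bar> \<le> P0 x + P1 x" for x
    using Cauchy_Schwarz_ineq2[of "act g1 u x - act g3 u x" "act g2 v x - act g4 v x"]
      Cauchy_Schwarz_ineq2[of "act g1 u' x - act g3 u' x" "act g2 v' x - act g4 v' x"]
    unfolding X_def P0_def P1_def by linarith
  then have "integrable lborel (\<lambda>x. - X x) \<and> integral\<^sup>L lborel (\<lambda>x. - X x) \<le> integral\<^sup>L lborel (\<lambda>x. P0 x + P1 x)"
    using P0(1) P1(1) unfolding X_def
    by (intro integrable_integral_le_dominated continuous_intros u.val.continuous_on_act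
        u.deriv.continuous_on_act v.val.continuous_on_act v.deriv.continuous_on_act) auto
  with P0 P1 show ?thesis
    unfolding X_def[symmetric] by simp
qed

definition orthogonality_const :: real where
  "orthogonality_const = 4 * amplitude\<^sup>2 * (2 + 4 / G)"

lemma orthogonality_const_pos: "0 < orthogonality_const"
  using u.val.G_pos u.val.K_pos by (simp add: orthogonality_const_def amplitude_def add_pos_nonneg)

lemma H1norm_act_diff_sq_sum_le:
  assumes "1 \<le> y0" "y0 \<le> fst g1" "y0 \<le> fst g3" "fst g2 \<le> - y0" "fst g4 \<le> - y0"
  shows "(H1norm (\<lambda>x. act g1 u x - act g3 u x))\<^sup>2 + (H1norm (\<lambda>x. act g2 v x - act g4 v x))\<^sup>2
    \<le> (H1norm (\<lambda>x. (act g1 u x - act g3 u x) + (act g2 v x - act g4 v x)))\<^sup>2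
      + orthogonality_const * y0 * exp (- 2 * G * y0)"
proof -
  define FA where "FA x = (norm (act g1 u x - act g3 u x))\<^sup>2 + (norm (act g1 u' x - act g3 u' x))\<^sup>2" for x
  define FB where "FB x = (norm (act g2 v x - act g4 v x))\<^sup>2 + (norm (act g2 v' x - act g4 v' x))\<^sup>2" for x
  define X where "X x = inner (act g1 u x - act g3 u x) (act g2 v x - act g4 v x)
      + inner (act g1 u' x - act g3 u' x) (act g2 v' x - act g4 v' x)" for x
  have FA: "integrable lborel FA" using u.H1_integrand_act_diff_integral[of g1 g3] by (simp add: FA_def[abs_def])
  have FB: "integrable lborel FB" using v.H1_integrand_act_diff_integral[of g2 g4] by (simp add: FB_def[abs_def])
  have X: "integrable lborel X" "- integral\<^sup>L lborel X \<le> 2 * amplitude\<^sup>2 * exp (- 2 * G * y0) * (2 * y0 + 4 / G)"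
    using cross_term_integral[of y0 g1 g3 g2 g4] assms unfolding X_def[abs_def] by auto
  have "(\<lambda>x. (norm ((act g1 u x - act g3 u x) + (act g2 v x - act g4 v x)))\<^sup>2
      + (norm ((act g1 u' x - act g3 u' x) + (act g2 v' x - act g4 v' x)))\<^sup>2) = (\<lambda>x. FA x + FB x + 2 * X x)"
    unfolding norm_add_sq_eq by (simp add: fun_eq_iff FA_def FB_def X_def algebra_simps)
  moreover have "(H1norm (\<lambda>x. (act g1 u x - act g3 u x) + (act g2 v x - act g4 v x)))\<^sup>2
      = (\<integral>x. (norm ((act g1 u x - act g3 u x) + (act g2 v x - act g4 v x)))\<^sup>2
        + (norm ((act g1 u' x - act g3 u' x) + (act g2 v' x - act g4 v' x)))\<^sup>2 \<partial>lborel)"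
    unfolding H1norm_sum_act_diff by (simp add: Bochner_Integration.integral_nonneg)
  ultimately have "(H1norm (\<lambda>x. (act g1 u x - act g3 u x) + (act g2 v x - act g4 v x)))\<^sup>2
      = integral\<^sup>L lborel FA + integral\<^sup>L lborel FB + 2 * integral\<^sup>L lborel X"
    using FA FB X(1) by simp
  moreover have "(H1norm (\<lambda>x. act g1 u x - act g3 u x))\<^sup>2 = integral\<^sup>L lborel FA"
    "(H1norm (\<lambda>x. act g2 v x - act g4 v x))\<^sup>2 = integral\<^sup>L lborel FB"
    unfolding u.H1norm_act_diff_sq v.H1norm_act_diff_sq FA_def FB_def by simp_all
  moreover have "2 * (2 * amplitude\<^sup>2 * exp (- 2 * G * y0) * (2 * y0 + 4 / G))
      \<le> orthogonality_const * y0 * exp (- 2 * G * y0)"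
  proof -
    define E where "E = exp (- 2 * G * y0)"
    have "2 * y0 + 4 / G \<le> (2 + 4 / G) * y0"
      using assms(1) u.val.G_pos mult_left_mono[of 1 y0 "4 / G"] by (simp add: algebra_simps)
    then have "(4 * amplitude\<^sup>2 * E) * (2 * y0 + 4 / G) \<le> (4 * amplitude\<^sup>2 * E) * ((2 + 4 / G) * y0)"
      by (intro mult_left_mono) (simp_all add: E_def)
    then show ?thesis
      unfolding orthogonality_const_def E_def[symmetric] by (simp add: algebra_simps)
  qed
  ultimately show ?thesis using X(2) by linarith
qed

end

section \<open>The soliton pair\<close>

context
  fixes G c a b :: real
  assumes G: "0 < G" "G \<le> 1" and c: "\<bar>c\<bar> \<le> 1" and a: "\<bar>a\<bar> \<le> 1" and b: "\<bar>b\<bar> \<le> 1"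
begin

lemma kink_profile_kink: "kink_profile (kink G c a b) (kink_deriv G c a b) G 20 (- a) a"
proof
  show "norm (kink G c a b z - a *\<^sub>R e1) \<le> 20 * exp (- G * z)" if "0 \<le> z" for z
  proof -
    have "norm (kink G c a b z - (1 * a) *\<^sub>R e1) \<le> 6 * exp (- G * \<bar>z\<bar>)"
      using G a b that by (intro norm_kink_sub_tail) simp_all
    then have "norm (kink G c a b z - a *\<^sub>R e1) \<le> 6 * exp (- G * z)"
      using that by simp
    then show ?thesis using exp_gt_zero[of "- G * z"] by linarith
  qed
  show "norm (kink G c a b z - (- a) *\<^sub>R e1) \<le> 20 * exp (G * z)" if "z \<le> 0" for z
  proof -
    have "norm (kink G c a b z - (- 1 * a) *\<^sub>R e1) \<le> 6 * exp (- G * \<bar>z\<bar>)"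
      using G a b that by (intro norm_kink_sub_tail) simp_all
    then have "norm (kink G c a b z - (- a) *\<^sub>R e1) \<le> 6 * exp (G * z)"
      using that by simp
    then show ?thesis using exp_gt_zero[of "G * z"] by linarith
  qed
  show "norm (kink_deriv G c a b z) \<le> 20 * exp (- G * \<bar>z\<bar>)" for z
    using norm_kink_deriv_le[of G c a b z] sech_scaled_le_exp_weighted[of G 5 z] G c a b by simp
qed (simp_all add: G kink_has_vector_derivative)

lemma kink_profile_kink_deriv: "kink_profile (kink_deriv G c a b) (kink_deriv2 G c a b) G 20 0 0"
proof
  show "norm (kink_deriv G c a b z - 0 *\<^sub>R e1) \<le> 20 * exp (- G * z)" if "0 \<le> z" for z
    using norm_kink_deriv_le[of G c a b z] sech_scaled_le_exp_weighted[of G 5 z] G c a b that by simp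
  show "norm (kink_deriv G c a b z - 0 *\<^sub>R e1) \<le> 20 * exp (G * z)" if "z \<le> 0" for z
    using norm_kink_deriv_le[of G c a b z] sech_scaled_le_exp_weighted[of G 5 z] G c a b that by simp
  show "norm (kink_deriv2 G c a b z) \<le> 20 * exp (- G * \<bar>z\<bar>)" for z
    using norm_kink_deriv2_le[of G c a b z] sech_scaled_le_exp_weighted[of G 10 z] G c a b by simp
qed (simp_all add: G kink_deriv_has_vector_derivative)

lemma kink_H1_kink: "kink_H1 (kink G c a b) (kink_deriv G c a b) (kink_deriv2 G c a b) G 20 (- a) a"
  using kink_profile_kink kink_profile_kink_deriv by (simp add: kink_H1_def)

end

lemma kink_pair_w_star:
  assumes "\<gamma> \<in> {-1<..<1}" and "s2 \<in> {-1, 1}" and "s2' \<in> {-1, 1}"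
  shows "kink_pair (w_star \<gamma> 1 s2) (kink_deriv (Gam \<gamma>) \<gamma> 1 s2) (kink_deriv2 (Gam \<gamma>) \<gamma> 1 s2)
    (w_star \<gamma> (-1) s2') (kink_deriv (Gam \<gamma>) (- \<gamma>) (-1) s2') (kink_deriv2 (Gam \<gamma>) (- \<gamma>) (-1) s2')
    (Gam \<gamma>) 20 (-1) 1 1 (-1)"
proof -
  have "\<gamma>\<^sup>2 < 1" using assms(1) by (simp add: abs_square_less_1 abs_less_iff)
  then have "0 < Gam \<gamma>" "Gam \<gamma> \<le> 1" by (simp_all add: Gam_def)
  moreover have "\<bar>\<gamma>\<bar> \<le> 1" "\<bar>s2\<bar> \<le> 1" "\<bar>s2'\<bar> \<le> 1" using assms by auto
  ultimately show ?thesis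
    using kink_H1_kink[of "Gam \<gamma>" \<gamma> 1 s2] kink_H1_kink[of "Gam \<gamma>" "- \<gamma>" "-1" s2']
    by (simp add: kink_pair_def w_star_eq_kink)
qed

lemma P_diff_eq:
  "(\<lambda>x. P \<gamma> s2 s2' g1 g2 x - P \<gamma> s2 s2' g3 g4 x)
    = (\<lambda>x. (act g1 (w_star \<gamma> 1 s2) x - act g3 (w_star \<gamma> 1 s2) x)
      + (act g2 (w_star \<gamma> (-1) s2') x - act g4 (w_star \<gamma> (-1) s2') x))"
  by (simp add: P_def fun_eq_iff algebra_simps)

theorem mainTheorem15:
  fixes \<gamma> s2 s2' :: real
  assumes "\<gamma> \<in> {-1<..<1}" and "s2 \<in> {-1, 1}" and "s2' \<in> {-1, 1}"
  shows "\<exists>C>0.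
    (\<forall>g1 g2 g3 g4 :: real \<times> real.
       H1norm (\<lambda>x. P \<gamma> s2 s2' g1 g2 x - P \<gamma> s2 s2' g3 g4 x)
         \<le> C * (gnorm (g1 - g3) + gnorm (g2 - g4))) \<and>
    (\<exists>ymin>0. \<forall>y0 \<ge> ymin. \<forall>g1 g2 g3 g4 :: real \<times> real.
       fst g1 \<ge> y0 \<longrightarrow> fst g3 \<ge> y0 \<longrightarrow> fst g2 \<le> - y0 \<longrightarrow> fst g4 \<le> - y0 \<longrightarrow>
       (H1norm (\<lambda>x. act g1 (w_star \<gamma> 1 s2) x - act g3 (w_star \<gamma> 1 s2) x))\<^sup>2
       + (H1norm (\<lambda>x. act g2 (w_star \<gamma> (-1) s2') x - act g4 (w_star \<gamma> (-1) s2') x))\<^sup>2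
       \<le> (H1norm (\<lambda>x. P \<gamma> s2 s2' g1 g2 x - P \<gamma> s2 s2' g3 g4 x))\<^sup>2
         + C * y0 * exp (- 2 * Gam \<gamma> * y0))"
proof -
  interpret kink_pair "w_star \<gamma> 1 s2" "kink_deriv (Gam \<gamma>) \<gamma> 1 s2" "kink_deriv2 (Gam \<gamma>) \<gamma> 1 s2"
    "w_star \<gamma> (-1) s2'" "kink_deriv (Gam \<gamma>) (- \<gamma>) (-1) s2'" "kink_deriv2 (Gam \<gamma>) (- \<gamma>) (-1) s2'"
    "Gam \<gamma>" 20 "-1" 1 1 "-1"
    using kink_pair_w_star[OF assms] .
  define C where "C = H1_lipschitz_const + orthogonality_const"
  have C: "H1_lipschitz_const \<le> C" "orthogonality_const \<le> C" "0 < C"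
    using H1_lipschitz_const_pos orthogonality_const_pos by (simp_all add: C_def)
  show ?thesis
  proof (rule exI[of _ C], intro conjI allI impI exI[of _ 1])
    show "H1norm (\<lambda>x. P \<gamma> s2 s2' g1 g2 x - P \<gamma> s2 s2' g3 g4 x) \<le> C * (gnorm (g1 - g3) + gnorm (g2 - g4))"
      for g1 g2 g3 g4
      unfolding P_diff_eq
      using H1norm_sum_act_diff_le[of g1 g3 g2 g4] C(1) gnorm_nonneg[of "g1 - g3"] gnorm_nonneg[of "g2 - g4"]
      by (meson add_nonneg_nonneg mult_right_mono order_trans)
    fix y0 :: real and g1 g2 g3 g4 :: "real \<times> real"
    assume y0: "1 \<le> y0" "y0 \<le> fst g1" "y0 \<le> fst g3" "fst g2 \<le> - y0" "fst g4 \<le> - y0"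
    have "orthogonality_const * y0 * exp (- 2 * Gam \<gamma> * y0) \<le> C * y0 * exp (- 2 * Gam \<gamma> * y0)"
      using C(2) y0(1) by (intro mult_right_mono) simp_all
    with H1norm_act_diff_sq_sum_le[OF y0]
    show "(H1norm (\<lambda>x. act g1 (w_star \<gamma> 1 s2) x - act g3 (w_star \<gamma> 1 s2) x))\<^sup>2
       + (H1norm (\<lambda>x. act g2 (w_star \<gamma> (-1) s2') x - act g4 (w_star \<gamma> (-1) s2') x))\<^sup>2
       \<le> (H1norm (\<lambda>x. P \<gamma> s2 s2' g1 g2 x - P \<gamma> s2 s2' g3 g4 x))\<^sup>2
         + C * y0 * exp (- 2 * Gam \<gamma> * y0)"
      unfolding P_diff_eq by linarith
  qed (use C(3) in simp_all)
qed

end
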